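(* Let $X$ be a set and let $((a_{i,j})_{j\geq 1})_{i\geq 1}\in (X^{\mathbb{N}})^{\mathbb{N}}$ be a countable family of sequences in $X$. Let $(b_n)_{n\geq 1}\in X^{\mathbb{N}}$ be the output of the sequence interleaving algorithm applied to this family. Then $(b_n)$ is eventually periodic if and only if at least one of the input sequences $(a_{i,j})_{j\geq 1}$ is eventually periodic.
   Context: A finite tuple $A=(a_1,\ldots,a_n)$ is called finite-periodic with period $k$ if $k<n$, $a_{i+k}=a_i$ for $i=1,\ldots,n-k$, and $k$ is minimal with this property (for every $h<k$ there is some $i\le n-h$ with $a_i\neq a_{i+h}$); then $(a_1,\ldots,a_k)$ is called the finite-fundamental string of $A$. Let $(i_k)_{k\geq 1}=(1,2,1,2,3,1,2,3,4,1,2,3,4,5,\ldots)$; explicitly, with $T_n=n(n+1)/2$, for $T_n\le k<T_{n+1}$ one has $i_k=k-T_n+1$. The sequence interleaving algorithm produces the output as the concatenation $B_1+B_2+\cdots$ of blocks, where block $B_l$ has length $2^l$, as follows: (1) Start with $k=l=1$ and a Boolean flag $P=$ false. (2) Form $B_l$ by removing the first $2^l$ not-yet-used terms of the sequence $(a_{i_k,j})_j$ (terms used in a block are never used in a later block; each block taken from a sequence starts at its first unused term). (3) If $P=$ false: if $B_l$ is finite-periodic, set $P=$ true and let $S$ be the finite-fundamental string of $B_l$; otherwise increment $k$ by $1$. If $P=$ true: $S$ is the finite-fundamental string of some concatenation $B_h+\cdots+B_{l-1}$ with $h<l$ (the blocks produced since $P$ last became true); check whether $B_h+\cdots+B_l$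 is finite-periodic with finite-fundamental string $S$; if not, set $P=$ false and increment $k$ by $1$. (4) Increment $l$ by $1$ and return to step (2). A sequence $(c_n)$ is eventually periodic if there exist $r\ge 0$ and $m\ge 1$ with $c_{n+m}=c_n$ for all $n>r$. *)

theory Defs
  imports Main
begin

text \<open>Sequences are 1-indexed: a family is a :: nat => nat => 'x where a i j is the
 j-th term of the i-th sequence (i, j >= 1); values at index 0 are never used.\<close>

definition is_fin_period :: "'x list \<Rightarrow> nat \<Rightarrow> bool" where
  "is_fin_period A k \<longleftrightarrow> 1 \<le> k \<and> k < length A \<and> (\<forall>i. i + k < length A \<longrightarrow> A ! i = A ! (i + k))"

definition fin_periodic :: "'x list \<Rightarrow> bool" where
  "fin_periodic A \<longleftrightarrow> (\<exists>k. is_fin_period A k)"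

definition fin_period :: "'x list \<Rightarrow> nat" where
  "fin_period A = (LEAST k. is_fin_period A k)"

definition fin_fundamental :: "'x list \<Rightarrow> 'x list" where
  "fin_fundamental A = take (fin_period A) A"

definition tri :: "nat \<Rightarrow> nat" where
  "tri n = n * (n + 1) div 2"

text \<open>(i_k) = 1,2,1,2,3,1,2,3,4,... for k >= 1\<close>
definition idx :: "nat \<Rightarrow> nat" where
  "idx k = k - tri (GREATEST n. tri n \<le> k) + 1"

text \<open>Algorithm state: (k, P, S, C, used) where C is the concatenation B_h + ... + B_(l-1)
 of the blocks since P last became true, and used i is the number of already used terms
 of sequence i.\<close>
type_synonym 'x ilstate = "nat \<times> bool \<times> 'x list \<times> 'x list \<times> (nat \<Rightarrow> nat)"

definition il_block :: "(nat \<Rightarrow> nat \<Rightarrow> 'x) \<Rightarrow> 'x ilstate \<Rightarrow> nat \<Rightarrow> 'x list" where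
  "il_block a st l = (case st of (k, P, S, C, used) \<Rightarrow>
     map (\<lambda>j. a (idx k) (used (idx k) + j + 1)) [0..<2 ^ l])"

definition il_step :: "(nat \<Rightarrow> nat \<Rightarrow> 'x) \<Rightarrow> nat \<Rightarrow> 'x ilstate \<Rightarrow> 'x ilstate" where
  "il_step a l st = (case st of (k, P, S, C, used) \<Rightarrow>
     let B = il_block a st l;
         used' = used(idx k := used (idx k) + 2 ^ l)
     in if \<not> P then
          (if fin_periodic B then (k, True, fin_fundamental B, B, used')
           else (k + 1, False, S, [], used'))
        else
          (let C' = C @ B in
           if fin_periodic C' \<and> fin_fundamental C' = S then (k, True, S, C', used')
           else (k + 1, False, S, [], used')))"

text \<open>il_state a l is the state after blocks B_1,...,B_l have been produced.\<close>
primrec il_state :: "(nat \<Rightarrow> nat \<Rightarrow> 'x) \<Rightarrow> nat \<Rightarrow> 'x ilstate" where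
  "il_state a 0 = (1, False, [], [], (\<lambda>_. 0))"
| "il_state a (Suc l) = il_step a (Suc l) (il_state a l)"

definition il_blk :: "(nat \<Rightarrow> nat \<Rightarrow> 'x) \<Rightarrow> nat \<Rightarrow> 'x list" where
  "il_blk a l = il_block a (il_state a (l - 1)) l"

text \<open>Output b_n (n >= 1): the n-th term of B_1 + B_2 + ... (the first n blocks already
 have total length 2^(n+1) - 2 >= n).\<close>
definition interleave :: "(nat \<Rightarrow> nat \<Rightarrow> 'x) \<Rightarrow> nat \<Rightarrow> 'x" where
  "interleave a n = concat (map (il_blk a) [1..<n + 1]) ! (n - 1)"

definition eventually_periodic :: "(nat \<Rightarrow> 'x) \<Rightarrow> bool" where
  "eventually_periodic c \<longleftrightarrow> (\<exists>r m. m \<ge> 1 \<and> (\<forall>n > r. c (n + m) = c n))"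

end

theory Submission
  imports Defs
begin

text \<open>
  The counter k of the algorithm never decreases, grows by at most one per block, and
  whenever it grows the flag P is reset. If k is eventually constant, take the last reset h:
  from then on the output is a tail of the single sequence a_(i_k), and the concatenation of
  the blocks since h keeps one finite-fundamental string S, so both the output and that
  sequence are periodic, with the length of S as period. Otherwise k is unbounded, and every input
  sequence is visited afresh arbitrarily late. If the output (or some a_i) is eventually
  m-periodic, choose such a visit late enough that every further block lies in the periodic
  part and the first block has length at least 2m. The concatenation of the blocks is then
  always a word with period m and length at least 2m, whose finite-fundamental string is
  already fixed by its first 2m letters, so the counter never moves again and we are back
  in the first case.
\<close>

lemma is_fin_period_nth_mod:
  assumes "is_fin_period A m" "i < length A"
  shows "A ! i = A ! (i mod m)"
  using assms(2)
proof (induction i rule: less_induct)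
  case (less i)
  show ?case
  proof (cases "i < m")
    case False
    then have "i - m + m < length A" using less.prems by simp
    then have "A ! (i - m) = A ! i"
      using assms(1) False unfolding is_fin_period_def by auto
    moreover have "A ! (i - m) = A ! (i mod m)"
      using less False assms(1) unfolding is_fin_period_def by (simp add: le_mod_geq)
    ultimately show ?thesis by simp
  qed simp
qed

lemma is_fin_period_fin_period:
  "fin_periodic A \<Longrightarrow> is_fin_period A (fin_period A)"
  unfolding fin_periodic_def fin_period_def by (blast intro: LeastI)

lemma fin_period_le: "is_fin_period A q \<Longrightarrow> fin_period A \<le> q"
  unfolding fin_period_def by (rule Least_le)

lemma length_fin_fundamental:
  "fin_periodic A \<Longrightarrow> length (fin_fundamental A) = fin_period A"
  using is_fin_period_fin_period[of A] unfolding fin_fundamental_def is_fin_period_def by simp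

lemma is_fin_period_append_left:
  assumes "is_fin_period (xs @ ys) q" "q < length xs"
  shows "is_fin_period xs q"
  unfolding is_fin_period_def
proof (intro conjI allI impI)
  fix i assume i: "i + q < length xs"
  then have "(xs @ ys) ! i = (xs @ ys) ! (i + q)"
    using assms(1) unfolding is_fin_period_def by simp
  then show "xs ! i = xs ! (i + q)"
    using i by (simp add: nth_append)
qed (use assms in \<open>auto simp: is_fin_period_def\<close>)

lemma fin_fundamental_append:
  assumes per: "is_fin_period (xs @ ys) m" and long: "2 * m \<le> length xs"
  shows "fin_fundamental (xs @ ys) = fin_fundamental xs"
proof -
  let ?zs = "xs @ ys"
  define p where "p = fin_period xs"
  have m: "0 < m" using per unfolding is_fin_period_def by simp
  have xs_m: "is_fin_period xs m"
    using long m by (intro is_fin_period_append_left[OF per]) simp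
  then have "fin_periodic xs"
    unfolding fin_periodic_def by blast
  then have xs_p: "is_fin_period xs p"
    unfolding p_def by (rule is_fin_period_fin_period)
  have pm: "p \<le> m"
    using xs_m unfolding p_def by (rule fin_period_le)
  have "?zs ! (i + p) = ?zs ! i" if i: "i + p < length ?zs" for i
  proof -
    have j: "i mod m + p < length xs"
      using mod_less_divisor[OF m, of i] long pm by linarith
    have "?zs ! (i + p) = ?zs ! ((i mod m + p) mod m)"
      using is_fin_period_nth_mod[OF per i] by (simp add: mod_add_left_eq)
    also have "\<dots> = ?zs ! (i mod m + p)"
      using is_fin_period_nth_mod[OF per, of "i mod m + p"] j by simp
    also have "\<dots> = xs ! (i mod m)"
      using xs_p j unfolding is_fin_period_def by (simp add: nth_append)
    also have "\<dots> = ?zs ! (i mod m)"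
      using j by (simp add: nth_append)
    also have "\<dots> = ?zs ! i"
      using is_fin_period_nth_mod[OF per, of i] i by simp
    finally show ?thesis .
  qed
  then have "is_fin_period ?zs p"
    using xs_p unfolding is_fin_period_def by auto
  moreover have "p \<le> q" if "is_fin_period ?zs q" for q
  proof (cases "q < length xs")
    case True
    with that have "is_fin_period xs q" by (rule is_fin_period_append_left)
    then show ?thesis unfolding p_def by (rule fin_period_le)
  next
    case False
    then show ?thesis using xs_p by (simp add: is_fin_period_def)
  qed
  ultimately have "fin_period ?zs = p"
    unfolding fin_period_def by (rule Least_equality)
  then show ?thesis
    using xs_p unfolding fin_fundamental_def p_def is_fin_period_def by simp
qed

lemma is_fin_period_if_shifted:
  assumes "\<forall>x<length A. A ! x = c (s + x)" and "\<forall>n>r. c (n + m) = c n"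
    and "r < s" "1 \<le> m" "m < length A"
  shows "is_fin_period A m"
  using assms unfolding is_fin_period_def by (auto simp: add.assoc [symmetric])

lemma eventually_periodicI:
  assumes "1 \<le> m" "\<And>x. c (s + x + m) = c (s + x)"
  shows "eventually_periodic c"
proof -
  have "c (n + m) = c n" if "s < n" for n
  proof -
    obtain x where "n = s + x" using \<open>s < n\<close> less_imp_add_positive by blast
    then show ?thesis using assms(2) by simp
  qed
  then show ?thesis using assms(1) unfolding eventually_periodic_def by blast
qed

definition il_k :: "(nat \<Rightarrow> nat \<Rightarrow> 'x) \<Rightarrow> nat \<Rightarrow> nat" where
  "il_k a l = fst (il_state a l)"

definition il_P :: "(nat \<Rightarrow> nat \<Rightarrow> 'x) \<Rightarrow> nat \<Rightarrow> bool" where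
  "il_P a l = fst (snd (il_state a l))"

definition il_S :: "(nat \<Rightarrow> nat \<Rightarrow> 'x) \<Rightarrow> nat \<Rightarrow> 'x list" where
  "il_S a l = fst (snd (snd (il_state a l)))"

definition il_C :: "(nat \<Rightarrow> nat \<Rightarrow> 'x) \<Rightarrow> nat \<Rightarrow> 'x list" where
  "il_C a l = fst (snd (snd (snd (il_state a l))))"

definition il_used :: "(nat \<Rightarrow> nat \<Rightarrow> 'x) \<Rightarrow> nat \<Rightarrow> nat \<Rightarrow> nat" where
  "il_used a l = snd (snd (snd (snd (il_state a l))))"

lemma il_state_eq: "il_state a l = (il_k a l, il_P a l, il_S a l, il_C a l, il_used a l)"
  by (simp add: il_k_def il_P_def il_S_def il_C_def il_used_def)

lemma il_state_0: "il_k a 0 = 1" "\<not> il_P a 0" "il_C a 0 = []"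
  by (simp_all add: il_k_def il_P_def il_C_def)

lemma il_blk_Suc:
  "il_blk a (Suc l) =
    map (\<lambda>j. a (idx (il_k a l)) (il_used a l (idx (il_k a l)) + j + 1)) [0..<2 ^ Suc l]"
  unfolding il_blk_def il_block_def by (subst il_state_eq) simp

lemma il_state_Suc_unfolded:
  "il_state a (Suc l) =
    (let k = il_k a l; B = il_blk a (Suc l);
         used = (il_used a l)(idx k := il_used a l (idx k) + 2 ^ Suc l)
     in if \<not> il_P a l then
          (if fin_periodic B then (k, True, fin_fundamental B, B, used)
           else (Suc k, False, il_S a l, [], used))
        else if fin_periodic (il_C a l @ B) \<and> fin_fundamental (il_C a l @ B) = il_S a l
          then (k, True, il_S a l, il_C a l @ B, used)
          else (Suc k, False, il_S a l, [], used))"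
  unfolding il_state.simps(2) il_blk_def diff_Suc_1
  by (subst (1 2) il_state_eq) (simp add: il_step_def il_block_def Let_def)

lemma il_invariant:
  "(\<not> il_P a l \<longrightarrow> il_C a l = []) \<and>
   (il_P a l \<longrightarrow> fin_periodic (il_C a l) \<and> fin_fundamental (il_C a l) = il_S a l)"
proof (cases l)
  case (Suc l')
  show ?thesis
    unfolding Suc il_P_def[of a "Suc l'"] il_C_def[of a "Suc l'"] il_S_def[of a "Suc l'"] il_state_Suc_unfolded
    by (simp add: Let_def)
qed (simp add: il_state_0)

text \<open>By the invariant, C is empty while P is false and S is the fundamental string of C
  while P is true, so the two branches of the step merge into one.\<close>

lemma il_state_Suc:
  "il_state a (Suc l) =
    (let k = il_k a l; C = il_C a l @ il_blk a (Suc l);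
         used = (il_used a l)(idx k := il_used a l (idx k) + 2 ^ Suc l)
     in if fin_periodic C \<and> (il_P a l \<longrightarrow> fin_fundamental C = fin_fundamental (il_C a l))
        then (k, True, fin_fundamental C, C, used)
        else (Suc k, False, il_S a l, [], used))"
  using il_invariant[of a l] unfolding il_state_Suc_unfolded by (auto simp: Let_def)

lemma il_k_Suc_eq_iff:
  "il_k a (Suc l) = il_k a l \<longleftrightarrow>
    fin_periodic (il_C a l @ il_blk a (Suc l)) \<and>
    (il_P a l \<longrightarrow> fin_fundamental (il_C a l @ il_blk a (Suc l)) = fin_fundamental (il_C a l))"
  unfolding il_k_def[of a "Suc l"] il_state_Suc by (simp add: Let_def)

lemma il_stay_step:
  assumes "il_k a (Suc l) = il_k a l"
  shows "il_P a (Suc l)" and "il_C a (Suc l) = il_C a l @ il_blk a (Suc l)"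
  using assms il_k_Suc_eq_iff[of a l] unfolding il_P_def[of a "Suc l"] il_C_def[of a "Suc l"] il_state_Suc
  by (simp_all add: Let_def)

lemma il_move_step:
  assumes "il_k a (Suc l) \<noteq> il_k a l"
  shows "il_k a (Suc l) = Suc (il_k a l)" and "\<not> il_P a (Suc l)"
  using assms unfolding il_k_def[of a "Suc l"] il_P_def[of a "Suc l"] il_state_Suc
  by (simp_all add: Let_def split: if_splits)

lemma il_used_Suc:
  "il_used a (Suc l) = (il_used a l)(idx (il_k a l) := il_used a l (idx (il_k a l)) + 2 ^ Suc l)"
  unfolding il_used_def[of a "Suc l"] il_state_Suc by (simp add: Let_def)

lemma il_k_Suc_cases: "il_k a (Suc l) = il_k a l \<or> il_k a (Suc l) = Suc (il_k a l)"
  using il_move_step(1) by blast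

lemma mono_il_k: "mono (il_k a)"
  unfolding mono_iff_le_Suc by (metis il_k_Suc_cases le_SucI order_refl)

lemma il_k_le: "il_k a l \<le> Suc l"
proof (induction l)
  case 0
  show ?case by (simp add: il_state_0)
next
  case (Suc l)
  then show ?case using il_k_Suc_cases[of a l] by auto
qed

lemma mono_il_used: "mono (\<lambda>l. il_used a l i)"
  unfolding mono_iff_le_Suc by (simp add: il_used_Suc)

lemma il_first_arrival:
  assumes "1 \<le> K" "K \<le> il_k a l"
  shows "\<exists>h\<le>l. il_k a h = K \<and> \<not> il_P a h"
  using assms(2)
proof (induction l)
  case 0
  then show ?case using assms(1) il_state_0[of a] by auto
next
  case (Suc l)
  show ?case
  proof (cases "K \<le> il_k a l")
    case True
    then show ?thesis using Suc.IH le_SucI by blast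
  next
    case False
    with Suc.prems il_k_Suc_cases[of a l] have "il_k a (Suc l) = K" "il_k a (Suc l) \<noteq> il_k a l"
      by auto
    then show ?thesis using il_move_step(2) by blast
  qed
qed

definition il_settles_at :: "(nat \<Rightarrow> nat \<Rightarrow> 'x) \<Rightarrow> nat \<Rightarrow> bool" where
  "il_settles_at a h \<longleftrightarrow> \<not> il_P a h \<and> (\<forall>t. il_k a (h + t) = il_k a h)"

lemma il_settles_or_unbounded: "(\<exists>h. il_settles_at a h) \<or> (\<forall>K. \<exists>l. K \<le> il_k a l)"
proof (cases "\<forall>K. \<exists>l. K \<le> il_k a l")
  case False
  then obtain K where "\<forall>l. il_k a l \<le> K"
    by (meson nle_le)
  then have fin: "finite (range (il_k a))"
    by (auto simp: finite_nat_set_iff_bounded_le)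
  have "Max (range (il_k a)) \<in> range (il_k a)"
    using fin by (rule Max_in) simp
  then obtain l where l: "il_k a l = Max (range (il_k a))"
    by (metis rangeE)
  have "1 \<le> il_k a l" using monoD[OF mono_il_k, of 0 l] by (simp add: il_state_0)
  then obtain h where h: "il_k a h = il_k a l" "\<not> il_P a h"
    using il_first_arrival by blast
  have "il_k a (h + t) = il_k a h" for t
  proof (rule antisym)
    show "il_k a (h + t) \<le> il_k a h" using Max_ge[OF fin] h l by simp
    show "il_k a h \<le> il_k a (h + t)" using monoD[OF mono_il_k, of h "h + t"] by simp
  qed
  then show ?thesis using h by (auto simp: il_settles_at_def)
qed simp

lemma tri_Suc: "tri (Suc n) = tri n + Suc n"
  by (simp add: tri_def)

lemma mono_tri: "mono tri"
  unfolding mono_iff_le_Suc by (simp add: tri_Suc)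

lemma le_tri: "n \<le> tri n"
  by (induction n) (simp_all add: tri_Suc)

lemma idx_tri: "j \<le> N \<Longrightarrow> idx (tri N + j) = Suc j"
proof -
  assume "j \<le> N"
  have "y \<le> N" if "tri y \<le> tri N + j" for y
  proof (rule ccontr)
    assume "\<not> y \<le> N"
    then have "tri (Suc N) \<le> tri y" using monoD[OF mono_tri] by simp
    with that \<open>j \<le> N\<close> show False by (simp add: tri_Suc)
  qed
  then have "(GREATEST n. tri n \<le> tri N + j) = N"
    by (intro Greatest_equality) simp_all
  then show ?thesis unfolding idx_def by simp
qed

lemma il_fresh_visit:
  assumes "\<forall>K. \<exists>l. K \<le> il_k a l" "1 \<le> i"
  shows "\<exists>l\<ge>n. idx (il_k a l) = i \<and> \<not> il_P a l"
proof -
  define K where "K = tri (n + i) + (i - 1)"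
  have "idx K = i" "n + 1 \<le> K"
    using idx_tri[of "i - 1" "n + i"] le_tri[of "n + i"] assms(2) unfolding K_def by auto
  obtain h where "il_k a h = K" "\<not> il_P a h"
    using assms(1) il_first_arrival \<open>n + 1 \<le> K\<close> by (metis le_add2 order_trans)
  moreover have "n \<le> h" using il_k_le[of a h] \<open>il_k a h = K\<close> \<open>n + 1 \<le> K\<close> by simp
  ultimately show ?thesis using \<open>idx K = i\<close> by blast
qed

definition il_output :: "(nat \<Rightarrow> nat \<Rightarrow> 'x) \<Rightarrow> nat \<Rightarrow> 'x list" where
  "il_output a l = concat (map (il_blk a) [1..<Suc l])"

definition il_run :: "(nat \<Rightarrow> nat \<Rightarrow> 'x) \<Rightarrow> nat \<Rightarrow> nat \<Rightarrow> 'x list" where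
  "il_run a h t = concat (map (il_blk a) [Suc h..<Suc (h + t)])"

lemma length_il_blk: "length (il_blk a l) = 2 ^ l"
  unfolding il_blk_def il_block_def by (simp split: prod.splits)

lemma il_run_0: "il_run a h 0 = []"
  by (simp add: il_run_def)

lemma il_run_Suc: "il_run a h (Suc t) = il_run a h t @ il_blk a (Suc (h + t))"
  by (simp add: il_run_def)

lemma il_output_add: "il_output a (h + t) = il_output a h @ il_run a h t"
proof -
  have "[1..<Suc h + t] = [1..<Suc h] @ [Suc h..<Suc h + t]"
    by (rule upt_add_eq_append) simp
  then show ?thesis
    unfolding il_output_def il_run_def by (simp del: upt_Suc)
qed

lemma length_il_run: "length (il_run a h t) + 2 ^ Suc h = 2 ^ Suc (h + t)"
  by (induction t) (simp_all add: il_run_0 il_run_Suc length_il_blk)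

lemma length_il_output: "length (il_output a l) + 2 = 2 ^ Suc l"
  using il_output_add[of a 0 l] length_il_run[of a 0 l] by (simp add: il_output_def)

lemma il_output_nth: "i < length (il_output a l) \<Longrightarrow> il_output a l ! i = interleave a (Suc i)"
proof -
  assume i: "i < length (il_output a l)"
  have "Suc (Suc i) < 2 ^ Suc (Suc i)" by (rule less_exp)
  then have "i < length (il_output a (Suc i))" using length_il_output[of a "Suc i"] by simp
  then have "interleave a (Suc i) = il_output a (Suc i + l) ! i"
    unfolding il_output_add[of a "Suc i" l]
    by (simp add: interleave_def il_output_def nth_append del: upt_Suc)
  also have "\<dots> = il_output a l ! i"
    using i il_output_add[of a l "Suc i"] by (simp add: add.commute nth_append)
  finally show ?thesis by simp
qed

lemma il_run_nth:
  "x < length (il_run a h t) \<Longrightarrow> il_run a h t ! x = interleave a (2 ^ Suc h - 1 + x)"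
proof -
  assume x: "x < length (il_run a h t)"
  have len: "Suc (length (il_output a h) + x) = 2 ^ Suc h - 1 + x"
    using length_il_output[of a h] by simp
  have "il_run a h t ! x = il_output a (h + t) ! (length (il_output a h) + x)"
    by (simp add: il_output_add)
  also have "\<dots> = interleave a (2 ^ Suc h - 1 + x)"
    using x len by (subst il_output_nth) (simp_all add: il_output_add)
  finally show ?thesis .
qed

lemma il_run_from_source:
  fixes a :: "nat \<Rightarrow> nat \<Rightarrow> 'x" and h t :: nat
  defines "i \<equiv> idx (il_k a h)" and "u \<equiv> il_used a h (idx (il_k a h))"
  assumes "\<forall>t'<t. il_k a (h + t') = il_k a h"
  shows "(\<forall>x < length (il_run a h t). il_run a h t ! x = a i (u + 1 + x)) \<and>
    il_used a (h + t) i = u + length (il_run a h t)"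
  using assms(3)
proof (induction t)
  case 0
  show ?case by (simp add: il_run_0 u_def i_def)
next
  case (Suc t)
  then have k: "il_k a (h + t) = il_k a h" and
    IH: "\<forall>x < length (il_run a h t). il_run a h t ! x = a i (u + 1 + x)"
      "il_used a (h + t) i = u + length (il_run a h t)"
    by simp_all
  have "il_blk a (Suc (h + t)) = map (\<lambda>j. a i (u + length (il_run a h t) + j + 1)) [0..<2 ^ Suc (h + t)]"
    using IH(2) k by (simp add: il_blk_Suc i_def)
  then have "\<forall>x < length (il_run a h (Suc t)). il_run a h (Suc t) ! x = a i (u + 1 + x)"
    using IH(1) by (auto simp: il_run_Suc nth_append length_il_blk)
  moreover have "il_used a (h + Suc t) i = u + length (il_run a h (Suc t))"
    using IH(2) k by (simp add: il_used_Suc il_run_Suc length_il_blk i_def)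
  ultimately show ?case by simp
qed

lemma il_run_long: "0 < t \<Longrightarrow> 2 ^ Suc h \<le> length (il_run a h t)"
  using length_il_run[of a h t] power_increasing[of "Suc (Suc h)" "Suc (h + t)" "2::nat"] by simp

lemma less_length_il_run: "n < length (il_run a h (Suc n))"
  using less_exp[of "Suc (h + n)"] by (simp add: il_run_Suc length_il_blk)

lemma il_C_eq_run:
  assumes "\<not> il_P a h" "\<forall>t'\<le>t. il_k a (h + t') = il_k a h"
  shows "il_C a (h + t) = il_run a h t"
  using assms(2)
proof (induction t)
  case 0
  show ?case using assms(1) il_invariant[of a h] by (simp add: il_run_0)
next
  case (Suc t)
  then have "il_k a (Suc (h + t)) = il_k a (h + t)" by (metis add_Suc_right le_SucI order_refl)
  then show ?case using Suc by (simp add: il_stay_step(2) il_run_Suc)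
qed

lemma il_settles_if_run_periodic:
  assumes fresh: "\<not> il_P a h" and m: "1 \<le> m" "2 * m \<le> 2 ^ Suc h"
    and per: "\<And>t. \<forall>t'\<le>t. il_k a (h + t') = il_k a h \<Longrightarrow> is_fin_period (il_run a h (Suc t)) m"
  shows "il_settles_at a h"
proof -
  have "\<forall>t'\<le>t. il_k a (h + t') = il_k a h" for t
  proof (induction t)
    case (Suc t)
    have C: "il_C a (h + t) = il_run a h t"
      using il_C_eq_run[OF fresh Suc] .
    have "fin_periodic (il_run a h (Suc t))"
      using per[OF Suc] unfolding fin_periodic_def by blast
    moreover have "fin_fundamental (il_run a h (Suc t)) = fin_fundamental (il_run a h t)"
      if "il_P a (h + t)"
    proof -
      have "0 < t" using that fresh by (cases t) auto
      then have "2 * m \<le> length (il_run a h t)" using il_run_long[of t h a] m(2) by simp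
      then show ?thesis
        using fin_fundamental_append per[OF Suc] by (simp add: il_run_Suc)
    qed
    ultimately have "il_k a (Suc (h + t)) = il_k a (h + t)"
      unfolding il_k_Suc_eq_iff C by (simp add: il_run_Suc)
    then show ?case using Suc by (auto simp: le_Suc_eq)
  qed simp
  then show ?thesis using fresh by (auto simp: il_settles_at_def)
qed

lemma il_run_periodic_if_settles:
  assumes "il_settles_at a h"
  shows "\<exists>p\<ge>1. \<forall>t x. x + p < length (il_run a h t) \<longrightarrow>
    il_run a h t ! (x + p) = il_run a h t ! x"
proof -
  have fresh: "\<not> il_P a h" and k: "\<And>t. il_k a (h + t) = il_k a h"
    using assms by (auto simp: il_settles_at_def)
  have C: "il_C a (h + t) = il_run a h t" for t
    using il_C_eq_run[OF fresh] k by simp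
  have stay: "il_k a (Suc (h + t)) = il_k a (h + t)" for t
    using k[of "Suc t"] k[of t] by simp
  have step: "fin_periodic (il_run a h (Suc t)) \<and>
      (il_P a (h + t) \<longrightarrow> fin_fundamental (il_run a h (Suc t)) = fin_fundamental (il_run a h t))" for t
    using il_k_Suc_eq_iff[THEN iffD1, OF stay[of t]] by (simp add: C il_run_Suc)
  then have periodic: "fin_periodic (il_run a h (Suc t))" for t
    by blast
  have fund: "fin_fundamental (il_run a h (Suc t)) = fin_fundamental (il_run a h 1)" for t
  proof (induction t)
    case (Suc t)
    have "il_P a (h + Suc t)" using il_stay_step(1)[OF stay[of t]] by simp
    then show ?case using Suc step[of "Suc t"] by simp
  qed simp
  define p where "p = fin_period (il_run a h 1)"
  have "fin_period (il_run a h (Suc t)) = p" for t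
    using length_fin_fundamental[OF periodic[of t]] length_fin_fundamental[OF periodic[of 0]] fund[of t]
    unfolding p_def by (metis One_nat_def)
  then have period: "is_fin_period (il_run a h (Suc t)) p" for t
    using is_fin_period_fin_period[OF periodic[of t]] by simp
  have "il_run a h t ! (x + p) = il_run a h t ! x" if "x + p < length (il_run a h t)" for t x
  proof -
    have "0 < t" using that by (cases t) (simp_all add: il_run_0)
    then show ?thesis using that period[of "t - 1"] by (simp add: is_fin_period_def)
  qed
  moreover have "1 \<le> p" using period[of 0] by (simp add: is_fin_period_def)
  ultimately show ?thesis by blast
qed

lemma il_periodic_if_settles:
  assumes "il_settles_at a h"
  shows "eventually_periodic (interleave a)" and "eventually_periodic (a (idx (il_k a h)))"
proof -
  obtain p where p: "1 \<le> p"
    and run: "\<And>t x. x + p < length (il_run a h t) \<Longrightarrow> il_run a h t ! (x + p) = il_run a h t ! x"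
    using il_run_periodic_if_settles[OF assms] by blast
  define s :: nat where "s = 2 ^ Suc h - 1"
  define i where "i = idx (il_k a h)"
  define u where "u = il_used a h i"
  have source: "\<forall>x<length (il_run a h t). il_run a h t ! x = a i (u + 1 + x)" for t
    using il_run_from_source[where a=a and h=h and t=t] assms unfolding il_settles_at_def i_def u_def by simp
  have shifted: "interleave a (s + x + p) = interleave a (s + x) \<and>
      a i (u + 1 + x + p) = a i (u + 1 + x)" for x
  proof -
    let ?R = "il_run a h (Suc (x + p))"
    have len: "x + p < length ?R" by (rule less_length_il_run)
    have shift: "?R ! (x + p) = ?R ! x" by (rule run[OF len])
    have "interleave a (s + x + p) = ?R ! (x + p)"
      using il_run_nth[OF len] unfolding s_def add.assoc by simp
    also have "\<dots> = interleave a (s + x)"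
      using shift il_run_nth[of x a h "Suc (x + p)"] len by (simp add: s_def)
    moreover have "a i (u + 1 + x + p) = ?R ! (x + p)"
      using source[of "Suc (x + p)"] len by (simp add: add.assoc)
    moreover have "\<dots> = a i (u + 1 + x)"
      using shift source[of "Suc (x + p)"] len by simp
    ultimately show ?thesis by (rule conjI[OF trans trans])
  qed
  show "eventually_periodic (interleave a)"
    using shifted by (intro eventually_periodicI[OF p, where s = s]) simp
  show "eventually_periodic (a (idx (il_k a h)))"
    using shifted unfolding i_def[symmetric] by (intro eventually_periodicI[OF p, where s = "u + 1"]) simp
qed

lemma il_fresh_visit_used:
  assumes "\<forall>K. \<exists>l. K \<le> il_k a l" "1 \<le> i"
  shows "\<exists>l\<ge>n. idx (il_k a l) = i \<and> \<not> il_P a l \<and> n \<le> il_used a l i"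
proof -
  obtain l1 where l1: "n \<le> l1" "idx (il_k a l1) = i"
    using il_fresh_visit[OF assms] by blast
  \<comment> \<open>the second visit comes after the first one has used 2 ^ Suc l1 terms of a i\<close>
  obtain l2 where l2: "Suc l1 \<le> l2" "idx (il_k a l2) = i" "\<not> il_P a l2"
    using il_fresh_visit[OF assms] by blast
  have "n < 2 ^ Suc l1" using l1(1) less_exp[of "Suc l1"] by simp
  also have "\<dots> \<le> il_used a (Suc l1) i" using l1(2) by (simp add: il_used_Suc)
  also have "\<dots> \<le> il_used a l2 i" using monoD[OF mono_il_used l2(1)] .
  finally show ?thesis using l1 l2 by (intro exI[of _ l2]) simp
qed

lemma il_settles_if_interleave_periodic:
  assumes "eventually_periodic (interleave a)"
  shows "\<exists>h. il_settles_at a h"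
proof -
  obtain r m where m: "1 \<le> m" and per: "\<forall>n>r. interleave a (n + m) = interleave a n"
    using assms unfolding eventually_periodic_def by blast
  show ?thesis
    using il_settles_or_unbounded[of a]
  proof
    assume "\<forall>K. \<exists>l. K \<le> il_k a l"
    then obtain h where h: "r + m \<le> h" "\<not> il_P a h"
      using il_fresh_visit[of a 1] by auto
    have big: "r + m < 2 ^ h" using h(1) less_exp[of h] by linarith
    have "is_fin_period (il_run a h (Suc t)) m" for t
      using il_run_long[of "Suc t" h a] big m
      by (intro is_fin_period_if_shifted[OF _ per, of _ "2 ^ Suc h - 1"]) (simp_all add: il_run_nth)
    then show ?thesis
      using il_settles_if_run_periodic[OF h(2) m] big by auto
  qed
qed

lemma il_settles_if_source_periodic:
  assumes "1 \<le> i" "eventually_periodic (a i)"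
  shows "\<exists>h. il_settles_at a h"
proof -
  obtain r m where m: "1 \<le> m" and per: "\<forall>n>r. a i (n + m) = a i n"
    using assms(2) unfolding eventually_periodic_def by blast
  show ?thesis
    using il_settles_or_unbounded[of a]
  proof
    assume "\<forall>K. \<exists>l. K \<le> il_k a l"
    then obtain h where h: "r + m \<le> h" "idx (il_k a h) = i" "\<not> il_P a h" "r + m \<le> il_used a h i"
      using il_fresh_visit_used[OF _ assms(1)] by blast
    have big: "r + m < 2 ^ h" using h(1) less_exp[of h] by linarith
    have "is_fin_period (il_run a h (Suc t)) m" if "\<forall>t'\<le>t. il_k a (h + t') = il_k a h" for t
      using il_run_long[of "Suc t" h a] big m h that il_run_from_source[where a=a and h=h and t="Suc t"]
      by (intro is_fin_period_if_shifted[OF _ per, of _ "il_used a h i + 1"]) auto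
    then show ?thesis
      using il_settles_if_run_periodic[OF h(3) m] big by auto
  qed
qed

theorem theorem1:
  fixes a :: "nat \<Rightarrow> nat \<Rightarrow> 'x"
  shows "eventually_periodic (interleave a) \<longleftrightarrow> (\<exists>i\<ge>1. eventually_periodic (a i))"
proof
  assume "eventually_periodic (interleave a)"
  then obtain h where "il_settles_at a h"
    using il_settles_if_interleave_periodic by blast
  moreover have "1 \<le> idx (il_k a h)" by (simp add: idx_def)
  ultimately show "\<exists>i\<ge>1. eventually_periodic (a i)"
    using il_periodic_if_settles(2) by blast
next
  assume "\<exists>i\<ge>1. eventually_periodic (a i)"
  then obtain h where "il_settles_at a h"
    using il_settles_if_source_periodic by blast
  then show "eventually_periodic (interleave a)"
    by (rule il_periodic_if_settles(1))
qed

end
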